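(* Let $n\ge1$, $f\in L^2([0,1]^n)$ and $\pi\in S_n$. Then $f$ and $\pi(f)$ have the same best shifted $L$-statistic approximation $f_L$, and $\|\pi(f)-f_L\|=\|f-f_L\|$.
   Context: $L^2([0,1]^n)$ is the space of square integrable real functions on $[0,1]^n$ modulo equality almost everywhere, with norm $\|g\|=(\int_{[0,1]^n}g^2\,d\mathbf{x})^{1/2}$. $S_n$ is the symmetric group on $\{1,\ldots,n\}$, acting on functions by $\pi(f)(x_1,\ldots,x_n)=f(x_{\pi(1)},\ldots,x_{\pi(n)})$. For $\mathbf{x}\in[0,1]^n$, $x_{(1)}\le\cdots\le x_{(n)}$ are its coordinates in ascending order and $\mathrm{os}_k(\mathbf{x})=x_{(k)}$. Let $V_L$ be the span of $\mathrm{os}_1,\ldots,\mathrm{os}_n$ and the constant $1$ (shifted $L$-statistic functions). The best shifted $L$-statistic approximation $f_L$ of $f$ is the unique $g\in V_L$ minimizing $\|f-g\|$. *)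

theory Defs
  imports "HOL-Analysis.Analysis" "HOL-Library.Multiset" "HOL-Combinatorics.Permutations"
begin

text \<open>Functions on [0,1]^n are modelled as functions real^'n => real, where the
  finite type 'n indexes the coordinates (n = CARD('n) >= 1).\<close>

abbreviation unit_cube :: "(real ^ 'n) set" where
  "unit_cube \<equiv> cbox 0 One"

definition in_L2 :: "(real ^ 'n \<Rightarrow> real) \<Rightarrow> bool" where
  "in_L2 f \<longleftrightarrow> f \<in> borel_measurable (lebesgue_on (unit_cube :: (real ^ 'n) set))
      \<and> integrable (lebesgue_on (unit_cube :: (real ^ 'n) set)) (\<lambda>x. (f x)\<^sup>2)"

definition L2_norm :: "(real ^ 'n \<Rightarrow> real) \<Rightarrow> real" where
  "L2_norm g = sqrt (integral\<^sup>L (lebesgue_on (unit_cube :: (real ^ 'n) set)) (\<lambda>x. (g x)\<^sup>2))"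

definition os :: "nat \<Rightarrow> real ^ 'n \<Rightarrow> real" where
  "os k x = sorted_list_of_multiset (image_mset (\<lambda>i. x $ i) (mset_set (UNIV :: 'n set))) ! (k - 1)"

definition V_L :: "(real ^ 'n \<Rightarrow> real) set" where
  "V_L = {g. \<exists>c0 (c :: nat \<Rightarrow> real).
            g = (\<lambda>x. c0 + (\<Sum>k\<in>{1..CARD('n)}. c k * os k x))}"

definition is_best_L :: "(real ^ 'n \<Rightarrow> real) \<Rightarrow> (real ^ 'n \<Rightarrow> real) \<Rightarrow> bool" where
  "is_best_L f g \<longleftrightarrow> g \<in> V_L \<and> (\<forall>h\<in>V_L. L2_norm (\<lambda>x. f x - g x) \<le> L2_norm (\<lambda>x. f x - h x))"

definition best_L :: "(real ^ 'n \<Rightarrow> real) \<Rightarrow> (real ^ 'n \<Rightarrow> real)" where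
  "best_L f = (THE g. is_best_L f g)"

definition perm_act :: "('n \<Rightarrow> 'n) \<Rightarrow> (real ^ 'n \<Rightarrow> real) \<Rightarrow> (real ^ 'n \<Rightarrow> real)" where
  "perm_act \<pi> f = (\<lambda>x. f (\<chi> i. x $ \<pi> i))"

end

theory Submission
  imports Defs
begin

text \<open>\<open>V_L\<close> is spanned by \<open>1, os\<^sub>1, \<dots>, os\<^sub>n\<close>, and these are linearly independent even
  pointwise on the cube: at the indicator vector of an \<open>m\<close>-element set, \<open>os\<^sub>k\<close> is \<open>1\<close>
  exactly for the top \<open>m\<close> indices \<open>k\<close>. Being continuous, they are independent in \<open>L\<^sup>2\<close>, so
  the Gram matrix is invertible and the best approximation \<open>f\<^sub>L\<close> exists and is unique.
  Every element of \<open>V_L\<close> is a symmetric function and coordinate permutations preserve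
  Lebesgue measure on the cube, so \<open>\<parallel>\<pi>(f) - h\<parallel> = \<parallel>f - h\<parallel>\<close> for all \<open>h \<in> V_L\<close>: the two
  minimisation problems coincide.\<close>

section \<open>The unit cube and coordinate permutations\<close>

lemma sum_Basis_vec_nth [simp]: "(\<Sum>b\<in>(Basis :: (real ^ 'n) set). b $ i) = 1"
proof -
  have "(\<Sum>b\<in>(Basis :: (real ^ 'n) set). b $ i) = (\<Sum>b\<in>(Basis :: (real ^ 'n) set). b) $ i"
    by (rule sum_component[symmetric])
  also have "\<dots> = 1" by (simp only: cart_eq_inner_axis) simp
  finally show ?thesis .
qed

lemma mem_unit_cube_iff: "x \<in> unit_cube \<longleftrightarrow> (\<forall>i. 0 \<le> x $ i \<and> x $ i \<le> (1::real))"
  by (simp add: mem_box_cart)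

abbreviation cube_lebesgue :: "(real ^ 'n) measure" where
  "cube_lebesgue \<equiv> lebesgue_on unit_cube"

lemma permute_cbox_image:
  fixes a b :: "real ^ 'n"
  assumes \<sigma>: "\<sigma> permutes (UNIV :: 'n set)"
  shows "(\<lambda>x. \<chi> i. x $ \<sigma> i) ` cbox a b = cbox (\<chi> i. a $ \<sigma> i) (\<chi> i. b $ \<sigma> i)"
proof
  show "(\<lambda>x. \<chi> i. x $ \<sigma> i) ` cbox a b \<subseteq> cbox (\<chi> i. a $ \<sigma> i) (\<chi> i. b $ \<sigma> i)"
    by (auto simp: mem_box_cart)
  show "cbox (\<chi> i. a $ \<sigma> i) (\<chi> i. b $ \<sigma> i) \<subseteq> (\<lambda>x. \<chi> i. x $ \<sigma> i) ` cbox a b"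
  proof
    fix y assume y: "y \<in> cbox (\<chi> i. a $ \<sigma> i) (\<chi> i. b $ \<sigma> i)"
    define z where "z = (\<chi> j. y $ inv \<sigma> j)"
    have "y = (\<chi> i. z $ \<sigma> i)"
      unfolding z_def using permutes_inverses(2)[OF \<sigma>] by (simp add: vec_eq_iff)
    moreover have "a $ j \<le> z $ j \<and> z $ j \<le> b $ j" for j
      using y[unfolded mem_box_cart, rule_format, of "inv \<sigma> j"] permutes_inverses(1)[OF \<sigma>]
      unfolding z_def by simp
    ultimately show "y \<in> (\<lambda>x. \<chi> i. x $ \<sigma> i) ` cbox a b" by (auto simp: mem_box_cart)
  qed
qed

lemma content_permute_cbox:
  fixes a b :: "real ^ 'n"
  assumes \<sigma>: "\<sigma> permutes (UNIV :: 'n set)"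
  shows "measure lborel ((\<lambda>x. \<chi> i. x $ \<sigma> i) ` cbox a b) = measure lborel (cbox a b)"
proof -
  have "cbox (\<chi> i. a $ \<sigma> i) (\<chi> i. b $ \<sigma> i) = {} \<longleftrightarrow> cbox a b = {}"
    using permute_cbox_image[OF \<sigma>, of a b] by auto
  moreover have "(\<Prod>i\<in>UNIV. b $ \<sigma> i - a $ \<sigma> i) = (\<Prod>i\<in>UNIV. b $ i - a $ i)"
    using prod.permute[OF \<sigma>, of "\<lambda>i. b $ i - a $ i"] by simp
  ultimately show ?thesis
    unfolding permute_cbox_image[OF \<sigma>] content_cbox_if_cart by simp
qed

lemma permute_unit_cube:
  assumes "\<sigma> permutes (UNIV :: 'n set)"
  shows "(\<lambda>x. \<chi> i. x $ \<sigma> i) ` (unit_cube :: (real ^ 'n) set) = unit_cube"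
proof -
  have "(\<chi> i. (0 :: real ^ 'n) $ \<sigma> i) = 0" "(\<chi> i. (One :: real ^ 'n) $ \<sigma> i) = One"
    by (simp_all add: vec_eq_iff)
  then show ?thesis using permute_cbox_image[OF assms, of 0 One] by simp
qed

lemma integral_permute_unit_cube:
  fixes F :: "real ^ 'n \<Rightarrow> real"
  assumes \<pi>: "\<pi> permutes (UNIV :: 'n set)"
    and F: "integrable cube_lebesgue F" and nonneg: "\<And>x. 0 \<le> F x"
  shows "integral\<^sup>L cube_lebesgue (\<lambda>x. F (\<chi> i. x $ \<pi> i)) = integral\<^sup>L cube_lebesgue F"
proof -
  let ?P = "\<lambda>x::real ^ 'n. \<chi> i. x $ \<pi> i"
  let ?Q = "\<lambda>x::real ^ 'n. \<chi> i. x $ inv \<pi> i"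
  have \<pi>': "inv \<pi> permutes (UNIV :: 'n set)" by (rule permutes_inv[OF \<pi>])
  have "linear ?P" by (rule linearI) (simp_all add: vec_eq_iff)
  then have "continuous (at x) ?P" for x by (simp add: linear_continuous_at linear_linear)
  then have "((\<lambda>x. F (?P x)) has_integral (1 / 1) *\<^sub>R integral\<^sup>L cube_lebesgue F) (?Q ` unit_cube)"
    using permutes_inverses[OF \<pi>] permute_cbox_image[OF \<pi>] permute_cbox_image[OF \<pi>']
      content_permute_cbox[OF \<pi>] has_integral_integral_lebesgue_on[OF F]
    by (intro has_integral_twiddle[where g = ?P and h = ?Q]) (auto simp: vec_eq_iff)
  then have P_int: "((\<lambda>x. F (?P x)) has_integral integral\<^sup>L cube_lebesgue F) unit_cube"
    using permute_unit_cube[OF \<pi>'] by simp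
  then have "integrable cube_lebesgue (\<lambda>x. F (?P x))"
    by (intro absolutely_integrable_imp_integrable nonnegative_absolutely_integrable_1)
      (auto simp: nonneg)
  then have "integral\<^sup>L cube_lebesgue (\<lambda>x. F (?P x)) = integral unit_cube (\<lambda>x. F (?P x))"
    by (rule lebesgue_integral_eq_integral) simp
  also have "\<dots> = integral\<^sup>L cube_lebesgue F" using P_int by (rule integral_unique)
  finally show ?thesis .
qed

section \<open>Order statistics\<close>

lemma sorted_nth_le_iff:
  fixes xs :: "real list"
  assumes "sorted xs" "k < length xs"
  shows "xs ! k \<le> t \<longleftrightarrow> k < length (filter (\<lambda>v. v \<le> t) xs)"
  using assms
proof (induction xs arbitrary: k)
  case Nil
  then show ?case by simp
next
  case (Cons a ys)
  show ?case
  proof (cases "a \<le> t")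
    case True
    then show ?thesis using Cons by (cases k) auto
  next
    case False
    then have "filter (\<lambda>v. v \<le> t) ys = []" using Cons.prems(1)
      by (auto simp: filter_empty_conv)
    moreover have "(a # ys) ! k \<ge> a" using Cons.prems
      by (cases k) auto
    ultimately show ?thesis using False by auto
  qed
qed

lemma length_sorted_coordinates:
  "length (sorted_list_of_multiset (image_mset (\<lambda>i. x $ i) (mset_set (UNIV :: 'n::finite set))))
     = CARD('n)"
  by (metis mset_sorted_list_of_multiset size_image_mset size_mset size_mset_set)

lemma os_le_iff:
  fixes x :: "real ^ 'n"
  assumes "1 \<le> k" "k \<le> CARD('n)"
  shows "os k x \<le> t \<longleftrightarrow> k \<le> card {i. x $ i \<le> t}"
proof -
  define ms where "ms = image_mset (\<lambda>i. x $ i) (mset_set (UNIV :: 'n set))"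
  define xs where "xs = sorted_list_of_multiset ms"
  have "length (filter (\<lambda>v. v \<le> t) xs) = size (filter_mset (\<lambda>v. v \<le> t) ms)"
    by (metis xs_def mset_filter mset_sorted_list_of_multiset size_mset)
  also have "\<dots> = card {i. x $ i \<le> t}"
    unfolding ms_def filter_mset_image_mset by (simp add: filter_mset_mset_set)
  finally have "length (filter (\<lambda>v. v \<le> t) xs) = card {i. x $ i \<le> t}" .
  moreover have "os k x = xs ! (k - 1)" unfolding os_def xs_def ms_def by simp
  ultimately show ?thesis
    using sorted_nth_le_iff[of xs "k - 1" t] length_sorted_coordinates[of x] assms
    by (auto simp: xs_def ms_def)
qed

lemma os_eq_component:
  fixes x :: "real ^ 'n"
  assumes "1 \<le> k" "k \<le> CARD('n)"
  obtains i where "os k x = x $ i"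
proof -
  define ms where "ms = image_mset (\<lambda>i. x $ i) (mset_set (UNIV :: 'n set))"
  have "os k x = sorted_list_of_multiset ms ! (k - 1)" unfolding os_def ms_def by simp
  moreover have "k - 1 < length (sorted_list_of_multiset ms)"
    using length_sorted_coordinates[of x] assms unfolding ms_def by simp
  ultimately have "os k x \<in> set (sorted_list_of_multiset ms)" by (metis nth_mem)
  also have "set (sorted_list_of_multiset ms) = set_mset ms"
    by (metis mset_sorted_list_of_multiset set_mset_mset)
  finally show ?thesis using that unfolding ms_def by auto
qed

lemma os_permute:
  fixes x :: "real ^ 'n"
  assumes "\<pi> permutes (UNIV :: 'n set)"
  shows "os k (\<chi> i. x $ \<pi> i) = os k x"
proof -
  have "image_mset (\<lambda>i. (\<chi> i. x $ \<pi> i) $ i) (mset_set (UNIV :: 'n set))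
      = image_mset (\<lambda>i. x $ i) (image_mset \<pi> (mset_set UNIV))"
    by (simp add: multiset.map_comp o_def)
  also have "image_mset \<pi> (mset_set UNIV) = mset_set (UNIV :: 'n set)"
    using assms by (simp add: image_mset_mset_set permutes_inj permutes_image)
  finally have "image_mset (\<lambda>i. (\<chi> i. x $ \<pi> i) $ i) (mset_set (UNIV :: 'n set))
      = image_mset (\<lambda>i. x $ i) (mset_set UNIV)" .
  then show ?thesis unfolding os_def by (rule arg_cong)
qed

lemma os_le_add_norm:
  fixes x y :: "real ^ 'n"
  assumes "1 \<le> k" "k \<le> CARD('n)"
  shows "os k y \<le> os k x + norm (x - y)"
proof -
  have "k \<le> card {i. x $ i \<le> os k x}" using os_le_iff[OF assms, of x "os k x"] by simp
  also have "\<dots> \<le> card {i. y $ i \<le> os k x + norm (x - y)}"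
  proof (rule card_mono)
    show "{i. x $ i \<le> os k x} \<subseteq> {i. y $ i \<le> os k x + norm (x - y)}"
    proof
      fix i assume "i \<in> {i. x $ i \<le> os k x}"
      moreover have "\<bar>(x - y) $ i\<bar> \<le> norm (x - y)" by (rule component_le_norm_cart)
      ultimately show "i \<in> {i. y $ i \<le> os k x + norm (x - y)}" by auto
    qed
  qed simp
  finally show ?thesis using os_le_iff[OF assms] by simp
qed

lemma continuous_on_os:
  assumes "1 \<le> k" "k \<le> CARD('n)"
  shows "continuous_on S (os k :: real ^ 'n \<Rightarrow> real)"
proof (rule lipschitz_on_continuous_on)
  show "1-lipschitz_on S (os k :: real ^ 'n \<Rightarrow> real)"
  proof (rule lipschitz_onI)
    fix x y :: "real ^ 'n"
    have "os k y \<le> os k x + norm (x - y)" "os k x \<le> os k y + norm (y - x)"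
      using os_le_add_norm[OF assms] by blast+
    then show "dist (os k x) (os k y) \<le> 1 * dist x y"
      by (simp add: dist_real_def dist_norm abs_le_iff norm_minus_commute)
  qed simp
qed

lemma os_indicator_vector:
  fixes A :: "'n::finite set"
  assumes "1 \<le> k" "k \<le> CARD('n)"
  shows "os k (\<chi> i. if i \<in> A then 1 else 0) = (if k + card A \<le> CARD('n) then 0 else 1)"
proof -
  let ?x = "\<chi> i. if i \<in> A then (1::real) else 0"
  have "{i. ?x $ i \<le> 0} = - A" by auto
  moreover have "card (- A) = CARD('n) - card A"
    by (simp add: Compl_eq_Diff_UNIV card_Diff_subset)
  moreover have "card A \<le> CARD('n)" by (rule card_mono) auto
  ultimately have "os k ?x \<le> 0 \<longleftrightarrow> k + card A \<le> CARD('n)"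
    using os_le_iff[OF assms, of ?x 0] by auto
  moreover obtain i where "os k ?x = ?x $ i" using os_eq_component[OF assms] .
  ultimately show ?thesis by (auto split: if_splits)
qed

lemma os_combination_vanishing:
  fixes c :: "nat \<Rightarrow> real"
  assumes zero: "\<And>x :: real ^ 'n. x \<in> unit_cube \<Longrightarrow> c0 + (\<Sum>k\<in>{1..CARD('n)}. c k * os k x) = 0"
  shows "c0 = 0" and "\<And>k. k \<in> {1..CARD('n)} \<Longrightarrow> c k = 0"
proof -
  let ?n = "CARD('n)"
  have tail: "c0 + (\<Sum>k\<in>{?n - m + 1..?n}. c k) = 0" if m: "m \<le> ?n" for m
  proof -
    obtain A :: "'n set" where A: "card A = m"
      using obtain_subset_with_card_n[of m "UNIV :: 'n set"] m by auto
    let ?x = "\<chi> i. if i \<in> A then (1::real) else 0"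
    have "(\<Sum>k\<in>{1..?n}. c k * os k ?x) = (\<Sum>k\<in>{1..?n}. if ?n < k + m then c k else 0)"
      using A by (intro sum.cong) (auto simp: os_indicator_vector)
    also have "\<dots> = (\<Sum>k\<in>{?n - m + 1..?n}. c k)"
      using m by (intro sum.mono_neutral_cong_right) auto
    finally show ?thesis using zero[of ?x] by (simp add: mem_unit_cube_iff)
  qed
  show "c0 = 0" using tail[of 0] by simp
  fix k assume k: "k \<in> {1..?n}"
  have "?n - k + 1 \<le> ?n" using k by auto
  then have "c0 + (\<Sum>k\<in>{k..?n}. c k) = 0" "c0 + (\<Sum>k\<in>{k + 1..?n}. c k) = 0"
    using tail[of "?n - k + 1"] tail[of "?n - k"] k by (simp_all add: Suc_diff_le)
  moreover have "(\<Sum>k\<in>{k..?n}. c k) = c k + (\<Sum>k\<in>{k + 1..?n}. c k)"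
    using k by (simp add: sum.atLeast_Suc_atMost)
  ultimately show "c k = 0" by simp
qed

section \<open>The inner product of \<open>L\<^sup>2\<close> on the unit cube\<close>

definition L2_inner :: "(real ^ 'n \<Rightarrow> real) \<Rightarrow> (real ^ 'n \<Rightarrow> real) \<Rightarrow> real" where
  "L2_inner g h = integral\<^sup>L cube_lebesgue (\<lambda>x. g x * h x)"

lemma L2_norm_eq_sqrt_inner: "L2_norm g = sqrt (L2_inner g g)"
  unfolding L2_norm_def L2_inner_def by (simp add: power2_eq_square)

lemma L2_inner_commute: "L2_inner g h = L2_inner h g"
  unfolding L2_inner_def by (simp add: mult.commute)

lemma L2_inner_self_nonneg: "0 \<le> L2_inner g g"
  unfolding L2_inner_def by simp

lemma in_L2_continuous:
  fixes g :: "real ^ 'n \<Rightarrow> real"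
  assumes "continuous_on unit_cube g"
  shows "in_L2 g"
  unfolding in_L2_def
proof
  show meas: "g \<in> borel_measurable cube_lebesgue"
    using assms by (rule continuous_imp_measurable_on_sets_lebesgue) simp
  obtain B where B: "\<And>x. x \<in> unit_cube \<Longrightarrow> \<bar>g x\<bar> \<le> B"
    using compact_imp_bounded[OF compact_continuous_image[OF assms compact_cbox]]
    by (auto simp: bounded_iff)
  show "integrable cube_lebesgue (\<lambda>x. (g x)\<^sup>2)"
  proof (rule Bochner_Integration.integrable_bound)
    show "integrable cube_lebesgue (\<lambda>x. B\<^sup>2)"
      by (intro finite_measure.integrable_const finite_measure_lebesgue_on) simp
    have "(g x)\<^sup>2 \<le> B\<^sup>2" if "x \<in> unit_cube" for x
      using B[OF that] by (metis abs_ge_zero abs_le_square_iff abs_of_nonneg order_trans power2_abs)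
    then show "AE x in cube_lebesgue. norm ((g x)\<^sup>2) \<le> norm (B\<^sup>2)"
      by (intro AE_I2) simp
  qed (use meas in measurable)
qed

lemma integrable_L2_mult:
  assumes "in_L2 g" "in_L2 h"
  shows "integrable cube_lebesgue (\<lambda>x. g x * h x)"
proof (rule Bochner_Integration.integrable_bound)
  show "integrable cube_lebesgue (\<lambda>x. (g x)\<^sup>2 + (h x)\<^sup>2)"
    using assms unfolding in_L2_def by simp
  show "(\<lambda>x. g x * h x) \<in> borel_measurable cube_lebesgue"
    using assms unfolding in_L2_def by (intro borel_measurable_times) auto
  have "2 * \<bar>g x * h x\<bar> \<le> (g x)\<^sup>2 + (h x)\<^sup>2" for x
    using sum_squares_bound[of "\<bar>g x\<bar>" "\<bar>h x\<bar>"] by (simp add: abs_mult)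
  then show "AE x in cube_lebesgue. norm (g x * h x) \<le> norm ((g x)\<^sup>2 + (h x)\<^sup>2)"
    by (intro AE_I2) (smt (verit) abs_ge_zero real_norm_def)
qed

lemma in_L2_add:
  assumes "in_L2 g" "in_L2 h"
  shows "in_L2 (\<lambda>x. g x + h x)"
proof -
  have "(\<lambda>x. (g x + h x)\<^sup>2) = (\<lambda>x. (g x)\<^sup>2 + 2 * (g x * h x) + (h x)\<^sup>2)"
    by (simp add: fun_eq_iff power2_sum)
  then show ?thesis using assms integrable_L2_mult[OF assms] unfolding in_L2_def
    by (auto intro: borel_measurable_add)
qed

lemma in_L2_cmult: "in_L2 g \<Longrightarrow> in_L2 (\<lambda>x. c * g x)"
  unfolding in_L2_def by (auto simp: power_mult_distrib)

lemma in_L2_diff: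
  assumes "in_L2 g" "in_L2 h"
  shows "in_L2 (\<lambda>x. g x - h x)"
  using in_L2_add[OF assms(1) in_L2_cmult[OF assms(2), of "-1"]] by simp

lemma L2_inner_diff_left:
  assumes "in_L2 g1" "in_L2 g2" "in_L2 h"
  shows "L2_inner (\<lambda>x. g1 x - g2 x) h = L2_inner g1 h - L2_inner g2 h"
  unfolding L2_inner_def using integrable_L2_mult[OF assms(1,3)] integrable_L2_mult[OF assms(2,3)]
  by (simp add: left_diff_distrib)

lemma L2_inner_pythagoras:
  assumes "in_L2 r" "in_L2 e" "L2_inner r e = 0"
  shows "L2_inner (\<lambda>x. r x + e x) (\<lambda>x. r x + e x) = L2_inner r r + L2_inner e e"
proof -
  have "(\<lambda>x. (r x + e x) * (r x + e x)) = (\<lambda>x. r x * r x + 2 * (r x * e x) + e x * e x)"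
    by (simp add: fun_eq_iff algebra_simps)
  then show ?thesis
    using assms integrable_L2_mult[OF assms(1,1)] integrable_L2_mult[OF assms(1,2)]
      integrable_L2_mult[OF assms(2,2)]
    unfolding L2_inner_def by simp
qed

lemma L2_inner_self_eq_0_continuous:
  fixes g :: "real ^ 'n \<Rightarrow> real"
  assumes "continuous_on unit_cube g" "L2_inner g g = 0" "x \<in> unit_cube"
  shows "g x = 0"
proof -
  have int: "integrable cube_lebesgue (\<lambda>x. g x * g x)"
    using in_L2_continuous[OF assms(1)] by (rule integrable_L2_mult) (rule in_L2_continuous[OF assms(1)])
  have "integral unit_cube (\<lambda>x. g x * g x) = 0"
    using assms(2) lebesgue_integral_eq_integral[OF int] unfolding L2_inner_def by simp
  moreover have "box 0 (One :: real ^ 'n) \<noteq> {}"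
    by (simp add: box_ne_empty)
  moreover have "continuous_on unit_cube (\<lambda>x. g x * g x)"
    by (intro continuous_intros assms(1))
  ultimately have "\<forall>x\<in>unit_cube. g x * g x = 0"
    using integral_cbox_eq_0_iff[of 0 One "\<lambda>x. g x * g x"] by simp
  then show ?thesis using assms(3) by simp
qed

section \<open>Best approximation by a finite independent family\<close>

definition lincomb :: "('m::finite \<Rightarrow> 'a \<Rightarrow> real) \<Rightarrow> real ^ 'm \<Rightarrow> 'a \<Rightarrow> real" where
  "lincomb \<phi> u x = (\<Sum>j\<in>UNIV. u $ j * \<phi> j x)"

lemma lincomb_diff: "lincomb \<phi> (u - w) x = lincomb \<phi> u x - lincomb \<phi> w x"
  unfolding lincomb_def by (simp add: left_diff_distrib sum_subtractf)

lemma continuous_on_lincomb: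
  "(\<And>j. continuous_on S (\<phi> j)) \<Longrightarrow> continuous_on S (lincomb \<phi> u)"
  unfolding lincomb_def by (intro continuous_intros)

lemma in_L2_lincomb:
  assumes "\<And>j. in_L2 (\<phi> j)"
  shows "in_L2 (lincomb \<phi> u)"
proof -
  have "in_L2 (\<lambda>x. \<Sum>j\<in>J. u $ j * \<phi> j x)" if "finite J" for J
    using that
  proof (induction J rule: finite_induct)
    case empty
    show ?case by (simp add: in_L2_continuous)
  next
    case (insert j J)
    then show ?case by (simp add: in_L2_add in_L2_cmult assms)
  qed
  then show ?thesis unfolding lincomb_def by (simp add: fun_eq_iff)
qed

lemma L2_inner_lincomb_left:
  assumes "\<And>j. in_L2 (\<phi> j)" "in_L2 h"
  shows "L2_inner (lincomb \<phi> u) h = (\<Sum>j\<in>UNIV. u $ j * L2_inner (\<phi> j) h)"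
proof -
  have "L2_inner (lincomb \<phi> u) h = integral\<^sup>L cube_lebesgue (\<lambda>x. \<Sum>j\<in>UNIV. u $ j * (\<phi> j x * h x))"
    unfolding L2_inner_def lincomb_def by (simp add: sum_distrib_right mult.assoc)
  also have "\<dots> = (\<Sum>j\<in>UNIV. u $ j * L2_inner (\<phi> j) h)"
    unfolding L2_inner_def using integrable_L2_mult[OF assms(1) assms(2)]
    by (simp add: Bochner_Integration.integral_sum)
  finally show ?thesis .
qed

text \<open>Solvability of the normal equations: the Gram matrix of an independent family is
  injective, hence surjective.\<close>
lemma exists_orthogonal_residual:
  fixes \<phi> :: "'m::finite \<Rightarrow> real ^ 'n \<Rightarrow> real"
  assumes \<phi>: "\<And>j. in_L2 (\<phi> j)"
    and indep: "\<And>d. L2_inner (lincomb \<phi> d) (lincomb \<phi> d) = 0 \<Longrightarrow> d = 0"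
    and f: "in_L2 f"
  obtains v where "\<And>w. L2_inner (\<lambda>x. f x - lincomb \<phi> v x) (lincomb \<phi> w) = 0"
proof -
  define G :: "real ^ 'm \<Rightarrow> real ^ 'm" where "G u = (\<chi> j. L2_inner (lincomb \<phi> u) (\<phi> j))" for u
  have G_nth: "G u $ j = (\<Sum>i\<in>UNIV. u $ i * L2_inner (\<phi> i) (\<phi> j))" for u j
    unfolding G_def using L2_inner_lincomb_left[of \<phi>, OF \<phi> \<phi>] by simp
  have inner_G: "L2_inner (lincomb \<phi> w) (lincomb \<phi> u) = (\<Sum>j\<in>UNIV. w $ j * G u $ j)" for u w
    unfolding G_def
    using L2_inner_lincomb_left[of \<phi> "lincomb \<phi> u" w, OF \<phi> in_L2_lincomb[of \<phi>, OF \<phi>]]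
    by (simp add: L2_inner_commute)
  have lin: "linear G"
  proof (rule linearI)
    show "G (u + w) = G u + G w" for u w
      by (simp add: vec_eq_iff G_nth distrib_right sum.distrib)
    show "G (c *\<^sub>R u) = c *\<^sub>R G u" for c u
      by (simp add: vec_eq_iff G_nth sum_distrib_left mult.assoc)
  qed
  have "inj G"
  proof (rule injI)
    fix u w assume "G u = G w"
    then have "G (u - w) = 0" using linear_diff[OF lin] by simp
    then have "L2_inner (lincomb \<phi> (u - w)) (lincomb \<phi> (u - w)) = 0" by (simp add: inner_G)
    then have "u - w = 0" by (rule indep)
    then show "u = w" by simp
  qed
  then obtain v where v: "G v = (\<chi> j. L2_inner f (\<phi> j))"
    using linear_inj_imp_surj[OF lin] by (metis surjE)
  have "L2_inner (\<lambda>x. f x - lincomb \<phi> v x) (lincomb \<phi> w) = 0" for w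
  proof -
    have "L2_inner f (lincomb \<phi> w) = (\<Sum>j\<in>UNIV. w $ j * G v $ j)"
      using L2_inner_lincomb_left[of \<phi>, OF \<phi> f] by (simp add: v L2_inner_commute)
    then show ?thesis
      using inner_G[of w v] L2_inner_diff_left[OF f in_L2_lincomb[of \<phi>, OF \<phi>] in_L2_lincomb[of \<phi>, OF \<phi>]]
      by (simp add: L2_inner_commute)
  qed
  then show ?thesis using that by blast
qed

lemma unique_best_L2_approximation:
  fixes \<phi> :: "'m::finite \<Rightarrow> real ^ 'n \<Rightarrow> real"
  assumes \<phi>: "\<And>j. in_L2 (\<phi> j)"
    and indep: "\<And>d. L2_inner (lincomb \<phi> d) (lincomb \<phi> d) = 0 \<Longrightarrow> d = 0"
    and f: "in_L2 f"
  shows "\<exists>!g. g \<in> range (lincomb \<phi>)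
    \<and> (\<forall>h\<in>range (lincomb \<phi>). L2_norm (\<lambda>x. f x - g x) \<le> L2_norm (\<lambda>x. f x - h x))"
proof -
  obtain v where orth: "\<And>w. L2_inner (\<lambda>x. f x - lincomb \<phi> v x) (lincomb \<phi> w) = 0"
    using exists_orthogonal_residual[of \<phi>, OF \<phi> indep f] by blast
  let ?dist2 = "\<lambda>u. L2_inner (\<lambda>x. f x - lincomb \<phi> u x) (\<lambda>x. f x - lincomb \<phi> u x)"
  have pythagoras: "?dist2 u = ?dist2 v + L2_inner (lincomb \<phi> (v - u)) (lincomb \<phi> (v - u))" for u
  proof -
    have "(\<lambda>x. f x - lincomb \<phi> u x) = (\<lambda>x. (f x - lincomb \<phi> v x) + lincomb \<phi> (v - u) x)"
      by (simp add: lincomb_diff fun_eq_iff)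
    then show ?thesis
      using L2_inner_pythagoras[OF in_L2_diff[OF f in_L2_lincomb[of \<phi>, OF \<phi>]] in_L2_lincomb[of \<phi>, OF \<phi>] orth]
      by simp
  qed
  show ?thesis
  proof (rule ex1I[of _ "lincomb \<phi> v"])
    show "lincomb \<phi> v \<in> range (lincomb \<phi>)
      \<and> (\<forall>h\<in>range (lincomb \<phi>). L2_norm (\<lambda>x. f x - lincomb \<phi> v x) \<le> L2_norm (\<lambda>x. f x - h x))"
    proof (intro conjI ballI)
      fix h assume "h \<in> range (lincomb \<phi>)"
      then obtain u where u: "h = lincomb \<phi> u" by blast
      have "?dist2 v \<le> ?dist2 u"
        using pythagoras[of u] L2_inner_self_nonneg[of "lincomb \<phi> (v - u)"] by linarith
      then show "L2_norm (\<lambda>x. f x - lincomb \<phi> v x) \<le> L2_norm (\<lambda>x. f x - h x)"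
        unfolding u L2_norm_eq_sqrt_inner by simp
    qed simp
  next
    fix g assume g: "g \<in> range (lincomb \<phi>)
      \<and> (\<forall>h\<in>range (lincomb \<phi>). L2_norm (\<lambda>x. f x - g x) \<le> L2_norm (\<lambda>x. f x - h x))"
    then obtain u where u: "g = lincomb \<phi> u" by blast
    have "?dist2 u \<le> ?dist2 v"
      using g unfolding u L2_norm_eq_sqrt_inner by simp
    then have "L2_inner (lincomb \<phi> (v - u)) (lincomb \<phi> (v - u)) = 0"
      using pythagoras[of u] L2_inner_self_nonneg[of "lincomb \<phi> (v - u)"] by simp
    then have "v - u = 0" by (rule indep)
    then show "g = lincomb \<phi> v" using u by simp
  qed
qed

section \<open>The space of shifted L-statistics\<close>

definition os_index :: "'n::finite \<Rightarrow> nat" where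
  "os_index = (SOME h. bij_betw h UNIV {1..CARD('n)})"

lemma bij_betw_os_index: "bij_betw (os_index :: 'n::finite \<Rightarrow> nat) UNIV {1..CARD('n)}"
proof -
  obtain h :: "nat \<Rightarrow> 'n" where "bij_betw h {1..CARD('n)} UNIV"
    using ex_bij_betw_nat_finite_1[of "UNIV :: 'n set"] by auto
  then have "\<exists>h :: 'n \<Rightarrow> nat. bij_betw h UNIV {1..CARD('n)}"
    using bij_betw_inv_into by blast
  then show ?thesis unfolding os_index_def by (rule someI_ex)
qed

lemma os_index_bounds: "1 \<le> os_index (i :: 'n::finite)" "os_index i \<le> CARD('n)"
  using bij_betw_os_index[where 'n='n] by (auto simp: bij_betw_def)

text \<open>The spanning family of \<open>V_L\<close>: the constant \<open>1\<close> at \<open>None\<close> and the order statistics at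
  \<open>Some i\<close>; indexing by \<open>'n option\<close> makes the coefficient vectors a Euclidean space.\<close>
definition os_basis :: "'n::finite option \<Rightarrow> real ^ 'n \<Rightarrow> real" where
  "os_basis j = (case j of None \<Rightarrow> (\<lambda>x. 1) | Some i \<Rightarrow> os (os_index i))"

lemma continuous_on_os_basis: "continuous_on S (os_basis j)"
  by (cases j) (auto simp: os_basis_def intro: continuous_on_os[OF os_index_bounds])

lemma in_L2_os_basis: "in_L2 (os_basis j)"
  by (rule in_L2_continuous[OF continuous_on_os_basis])

lemma sum_UNIV_option:
  fixes f :: "'a::finite option \<Rightarrow> 'b::comm_monoid_add"
  shows "(\<Sum>j\<in>UNIV. f j) = f None + (\<Sum>i\<in>UNIV. f (Some i))"
  by (simp add: UNIV_option_conv sum.reindex)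

lemma lincomb_os_basis:
  "lincomb os_basis u x
     = u $ None + (\<Sum>k\<in>{1..CARD('n)}. u $ Some (inv_into UNIV os_index k) * os k (x :: real ^ 'n))"
proof -
  have "(\<Sum>i\<in>UNIV. u $ Some (i :: 'n) * os (os_index i) x)
      = (\<Sum>i\<in>UNIV. u $ Some (inv_into UNIV os_index (os_index (i :: 'n))) * os (os_index i) x)"
    using bij_betw_imp_inj_on[OF bij_betw_os_index[where 'n='n]] by (simp add: inv_f_f)
  also have "\<dots> = (\<Sum>k\<in>{1..CARD('n)}. u $ Some (inv_into UNIV os_index k) * os k x)"
    by (rule sum.reindex_bij_betw[OF bij_betw_os_index])
  finally show ?thesis unfolding lincomb_def sum_UNIV_option by (simp add: os_basis_def)
qed

lemma V_L_eq_range_lincomb: "V_L = range (lincomb (os_basis :: 'n::finite option \<Rightarrow> _))"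
proof
  show "V_L \<subseteq> range (lincomb (os_basis :: 'n option \<Rightarrow> _))"
  proof
    fix g :: "real ^ 'n \<Rightarrow> real" assume "g \<in> V_L"
    then obtain c0 c where g: "g = (\<lambda>x. c0 + (\<Sum>k\<in>{1..CARD('n)}. c k * os k x))"
      unfolding V_L_def by auto
    define u :: "real ^ 'n option" where
      "u = (\<chi> j. case j of None \<Rightarrow> c0 | Some i \<Rightarrow> c (os_index i))"
    have "u $ Some (inv_into UNIV os_index k) = c k" if "k \<in> {1..CARD('n)}" for k
      using that bij_betw_os_index[where 'n='n] unfolding u_def
      by (simp add: bij_betw_def f_inv_into_f)
    then have "lincomb os_basis u = g"
      unfolding g by (simp add: fun_eq_iff lincomb_os_basis u_def)
    then show "g \<in> range (lincomb os_basis)" by (metis rangeI)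
  qed
  show "range (lincomb (os_basis :: 'n option \<Rightarrow> _)) \<subseteq> V_L"
  proof
    fix g assume "g \<in> range (lincomb (os_basis :: 'n option \<Rightarrow> _))"
    then obtain u where "g = lincomb os_basis u" by blast
    then have "g = (\<lambda>x. u $ None + (\<Sum>k\<in>{1..CARD('n)}. u $ Some (inv_into UNIV os_index k) * os k x))"
      by (simp add: fun_eq_iff lincomb_os_basis)
    then show "g \<in> V_L" unfolding V_L_def by (intro CollectI exI)
  qed
qed

lemma os_basis_independent:
  assumes "L2_inner (lincomb os_basis d) (lincomb os_basis d) = 0"
  shows "d = (0 :: real ^ ('n::finite option))"
proof -
  let ?c = "\<lambda>k. d $ Some (inv_into UNIV os_index k)"
  have "d $ None + (\<Sum>k\<in>{1..CARD('n)}. ?c k * os k x) = 0" if "x \<in> unit_cube" for x :: "real ^ 'n"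
    using L2_inner_self_eq_0_continuous[OF continuous_on_lincomb[OF continuous_on_os_basis] assms that]
    by (simp add: lincomb_os_basis)
  note vanishing = os_combination_vanishing[OF this]
  have "d $ Some i = 0" for i :: 'n
    using vanishing(2)[of "os_index i"] os_index_bounds[of i]
      bij_betw_imp_inj_on[OF bij_betw_os_index[where 'n='n]] by simp
  then have "d $ j = 0" for j using vanishing(1) by (cases j) auto
  then show ?thesis by (simp add: vec_eq_iff)
qed

lemma best_L_in_V_L:
  fixes f :: "real ^ 'n \<Rightarrow> real"
  assumes "in_L2 f"
  shows "best_L f \<in> V_L"
proof -
  have "\<exists>!g. is_best_L f g"
    unfolding is_best_L_def V_L_eq_range_lincomb
    using unique_best_L2_approximation[OF in_L2_os_basis os_basis_independent assms] .
  then have "is_best_L f (best_L f)" unfolding best_L_def by (rule theI')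
  then show ?thesis unfolding is_best_L_def by blast
qed

lemma in_L2_V_L: "h \<in> V_L \<Longrightarrow> in_L2 h"
  unfolding V_L_eq_range_lincomb using in_L2_lincomb[of os_basis, OF in_L2_os_basis] by blast

lemma V_L_permute:
  assumes "h \<in> V_L" "\<pi> permutes (UNIV :: 'n::finite set)"
  shows "h (\<chi> i. x $ \<pi> i) = h (x :: real ^ 'n)"
  using assms os_permute[OF assms(2)] unfolding V_L_def by auto

lemma L2_norm_perm_act_diff_V_L:
  assumes f: "in_L2 f" and h: "h \<in> V_L" and \<pi>: "\<pi> permutes (UNIV :: 'n set)"
  shows "L2_norm (\<lambda>x. perm_act \<pi> f x - h x) = L2_norm (\<lambda>x. f x - h (x :: real ^ 'n))"
proof -
  have "in_L2 (\<lambda>x. f x - h x)" by (rule in_L2_diff[OF f in_L2_V_L[OF h]])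
  moreover have "(\<lambda>x. (perm_act \<pi> f x - h x)\<^sup>2) = (\<lambda>x. (f (\<chi> i. x $ \<pi> i) - h (\<chi> i. x $ \<pi> i))\<^sup>2)"
    using V_L_permute[OF h \<pi>] by (simp add: perm_act_def)
  ultimately show ?thesis
    using integral_permute_unit_cube[OF \<pi>, of "\<lambda>y. (f y - h y)\<^sup>2"]
    unfolding L2_norm_def in_L2_def by simp
qed

theorem proposition10:
  fixes f :: "real ^ 'n \<Rightarrow> real" and \<pi> :: "'n \<Rightarrow> 'n"
  assumes "in_L2 f"
    and "\<pi> permutes (UNIV :: 'n set)"
  shows "best_L (perm_act \<pi> f) = best_L f
    \<and> L2_norm (\<lambda>x. perm_act \<pi> f x - best_L f x) = L2_norm (\<lambda>x. f x - best_L f x)"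
proof -
  note dist_eq = L2_norm_perm_act_diff_V_L[OF assms(1) _ assms(2)]
  have "is_best_L (perm_act \<pi> f) = is_best_L f"
    unfolding is_best_L_def by (auto simp: fun_eq_iff dist_eq)
  then have "best_L (perm_act \<pi> f) = best_L f" unfolding best_L_def by (simp only:)
  then show ?thesis using dist_eq[OF best_L_in_V_L[OF assms(1)]] by simp
qed

end
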